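(* Let $H=(Q,\pi,f_0,f_1)$ be a two-state HMM parameter with stationary hidden chain, satisfying Assumption A1, and let $f_\pi=\pi_0f_0+\pi_1f_1$. Then for any $a>1+\nu^{-1}$, $$\Pi_H\Big(\max_{i\le R}1/f_\pi(X_i)>R^a\Big)\to0\quad\text{as }R\to\infty.$$
   Context: $\mu$ is Lebesgue measure on $\mathbb R$ or counting measure on $\mathbb Z$. Under $\Pi_H$, $(\theta_n)_{n\ge1}$ is a Markov chain on $\{0,1\}$ with transition matrix $Q$ and initial law $\pi$ equal to its invariant distribution, and given $\theta$ the $X_n$ are independent with $\mu$-densities $f_{\theta_n}$; so each $X_i$ has density $f_\pi$. Assumption A1: (i) there is $\nu>0$ with $\max_{j=0,1}E_{X\sim f_j}|X|^\nu<\infty$; (ii) there is $x^*\in\mathbb R\cup\{\pm\infty\}$ with $f_1(x)/f_0(x)\to\infty$ as $x\uparrow x^*$ or as $x\downarrow x^*$ (conventions $1/0=\infty$, $0/0=0$). *)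

theory Defs
  imports "HOL-Probability.Probability"
begin

text \<open>Reference measure: Lebesgue measure on the reals (disc = False) or counting
  measure on the integers, viewed as a measure on the Borel sets of the reals (disc = True).\<close>

definition zcount :: "real measure" where
  "zcount = distr (count_space (UNIV :: int set)) borel real_of_int"

definition base_measure :: "bool \<Rightarrow> real measure" where
  "base_measure disc = (if disc then zcount else lborel)"

definition base_set :: "bool \<Rightarrow> real set" where
  "base_set disc = (if disc then \<int> else UNIV)"

definition is_density :: "real measure \<Rightarrow> (real \<Rightarrow> real) \<Rightarrow> bool" where
  "is_density \<mu> g \<longleftrightarrow> g \<in> borel_measurable borel \<and> (\<forall>x. 0 \<le> g x)
      \<and> (\<integral>\<^sup>+ x. ennreal (g x) \<partial>\<mu>) = 1"

definition stoch2 :: "(nat \<Rightarrow> nat \<Rightarrow> real) \<Rightarrow> bool" where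
  "stoch2 Q \<longleftrightarrow> (\<forall>i\<in>{0,1}. \<forall>j\<in>{0,1}. 0 \<le> Q i j) \<and> (\<forall>i\<in>{0,1}. Q i 0 + Q i 1 = 1)"

definition invariant2 :: "(nat \<Rightarrow> nat \<Rightarrow> real) \<Rightarrow> (nat \<Rightarrow> real) \<Rightarrow> bool" where
  "invariant2 Q p \<longleftrightarrow> 0 \<le> p 0 \<and> 0 \<le> p 1 \<and> p 0 + p 1 = 1
      \<and> (\<forall>j\<in>{0,1}. p j = p 0 * Q 0 j + p 1 * Q 1 j)"

text \<open>The law \<Pi>_H of the HMM: theta_1, theta_2, ... is a Markov chain on {0,1} with
  transition matrix Q and initial law p; given theta, the X_n are independent with
  densities f (theta_n).\<close>

definition hmm_law ::
  "'w measure \<Rightarrow> real measure \<Rightarrow> (nat \<Rightarrow> nat \<Rightarrow> real) \<Rightarrow> (nat \<Rightarrow> real)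
     \<Rightarrow> (nat \<Rightarrow> real \<Rightarrow> real) \<Rightarrow> (nat \<Rightarrow> 'w \<Rightarrow> nat) \<Rightarrow> (nat \<Rightarrow> 'w \<Rightarrow> real) \<Rightarrow> bool" where
  "hmm_law M \<mu> Q p f \<theta> X \<longleftrightarrow>
     prob_space M
     \<and> (\<forall>n. \<theta> n \<in> measurable M (count_space UNIV))
     \<and> (\<forall>n. X n \<in> borel_measurable M)
     \<and> (\<forall>n\<ge>1. \<forall>s A. (\<forall>i\<in>{1..n}. s i \<in> {0,1} \<and> A i \<in> sets borel) \<longrightarrow>
          measure M {\<omega> \<in> space M. \<forall>i\<in>{1..n}. \<theta> i \<omega> = s i \<and> X i \<omega> \<in> A i}
          = p (s 1) * (\<Prod>i\<in>{1..<n}. Q (s i) (s (Suc i)))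
              * (\<Prod>i\<in>{1..n}. (LINT x:A i|\<mu>. f (s i) x)))"

definition lr_ratio :: "(real \<Rightarrow> real) \<Rightarrow> (real \<Rightarrow> real) \<Rightarrow> real \<Rightarrow> ereal" where
  "lr_ratio f0 f1 x = (if f0 x = 0 then (if f1 x = 0 then 0 else \<infinity>) else ereal (f1 x / f0 x))"

text \<open>Assumption A1 (ii): f1/f0 \<rightarrow> \<infinity> as x increases to x* or decreases to x*,
  for some x* in the extended reals, x ranging over the support of the reference measure.\<close>

definition A1_ii :: "bool \<Rightarrow> (real \<Rightarrow> real) \<Rightarrow> (real \<Rightarrow> real) \<Rightarrow> bool" where
  "A1_ii disc f0 f1 \<longleftrightarrow>
     (\<exists>F. F \<noteq> bot \<and> (lr_ratio f0 f1 \<longlongrightarrow> \<infinity>) F \<and>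
        ((\<exists>xs. F = at xs within ({..<xs} \<inter> base_set disc))
       \<or> (\<exists>xs. F = at xs within ({xs<..} \<inter> base_set disc))
       \<or> F = inf at_top (principal (base_set disc))
       \<or> F = inf at_bot (principal (base_set disc))))"

end

theory Submission
  imports Defs
begin

text \<open>
  Summing the probabilities of all hidden state paths and using the invariance of p shows that
  every X_n has the mixture density f_pi = p 0 * f 0 + p 1 * f 1. By the union bound the
  probability in question is at most R * P(f_pi(X_1) < R^-a). Splitting according to whether
  |X| <= T gives P(f_pi(X) < 1/c) <= mu[-T,T] / c + T^-nu * E|X|^nu, and with c = R^a, T = R^b,
  1/nu < b < a - 1 the resulting bound R * ((2 R^b + 1) / R^a + R^(-b nu) * E|X|^nu) tends to 0.
\<close>

definition path_weight ::
    "(nat \<Rightarrow> nat \<Rightarrow> real) \<Rightarrow> (nat \<Rightarrow> real) \<Rightarrow> nat \<Rightarrow> (nat \<Rightarrow> nat) \<Rightarrow> real" where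
  "path_weight Q p n s = p (s 1) * (\<Prod>i\<in>{1..<n}. Q (s i) (s (Suc i)))"

lemma sum_PiE_insert:
  assumes "x \<notin> S"
  shows "(\<Sum>s\<in>Pi\<^sub>E (insert x S) T. h s) = (\<Sum>y\<in>T x. \<Sum>s\<in>Pi\<^sub>E S T. h (s(x := y)))"
proof -
  have "(\<Sum>s\<in>Pi\<^sub>E (insert x S) T. h s) = (\<Sum>(y, s)\<in>T x \<times> Pi\<^sub>E S T. h (s(x := y)))"
    unfolding PiE_insert_eq by (subst sum.reindex[OF inj_combinator[OF assms]]) (simp add: case_prod_beta')
  then show ?thesis
    by (simp add: sum.cartesian_product)
qed

lemma path_weight_fun_upd_Suc:
  assumes "n \<ge> 1"
  shows "path_weight Q p (Suc n) (s(Suc n := y)) = path_weight Q p n s * Q (s n) y"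
proof -
  have "(\<Prod>i\<in>{1..<n}. Q ((s(Suc n := y)) i) ((s(Suc n := y)) (Suc i)))
      = (\<Prod>i\<in>{1..<n}. Q (s i) (s (Suc i)))"
    by (rule prod.cong) auto
  then show ?thesis
    using assms by (simp add: path_weight_def prod.atLeastLessThan_Suc mult.assoc)
qed

lemma sum_path_weight_stationary:
  assumes p: "invariant2 Q p" and n: "n \<ge> 1"
  shows "(\<Sum>s\<in>{1..n} \<rightarrow>\<^sub>E {0,1}. path_weight Q p n s * g (s n)) = p 0 * g 0 + p 1 * g 1"
  using n
proof (induction n arbitrary: g rule: dec_induct)
  case base
  show ?case
    by (subst atLeastAtMost_singleton, subst sum_PiE_insert) (auto simp: path_weight_def)
next
  case (step n)
  have "{1..Suc n} = insert (Suc n) {1..n}" using step.hyps by auto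
  then have "(\<Sum>s\<in>{1..Suc n} \<rightarrow>\<^sub>E {0,1}. path_weight Q p (Suc n) s * g (s (Suc n)))
      = (\<Sum>y\<in>{0,1}. \<Sum>s\<in>{1..n} \<rightarrow>\<^sub>E {0,1}. path_weight Q p n s * Q (s n) y * g y)"
    using step.hyps by (simp add: sum_PiE_insert path_weight_fun_upd_Suc)
  also have "\<dots> = (\<Sum>s\<in>{1..n} \<rightarrow>\<^sub>E {0,1}. path_weight Q p n s * (\<Sum>y\<in>{0,1}. Q (s n) y * g y))"
    by (subst sum.swap) (simp add: sum_distrib_left mult.assoc distrib_left sum.distrib)
  also have "\<dots> = p 0 * (Q 0 0 * g 0 + Q 0 1 * g 1) + p 1 * (Q 1 0 * g 0 + Q 1 1 * g 1)"
    using step.IH by simp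
  also have "\<dots> = (p 0 * Q 0 0 + p 1 * Q 1 0) * g 0 + (p 0 * Q 0 1 + p 1 * Q 1 1) * g 1"
    by (simp add: algebra_simps)
  also have "\<dots> = p 0 * g 0 + p 1 * g 1"
    using p unfolding invariant2_def by auto
  finally show ?case .
qed

lemma is_density_integrable:
  assumes "sets \<mu> = sets borel" and "is_density \<mu> g"
  shows "integrable \<mu> g" and "integral\<^sup>L \<mu> g = 1"
proof -
  have g: "g \<in> borel_measurable \<mu>" "\<And>x. 0 \<le> g x" "(\<integral>\<^sup>+ x. ennreal (g x) \<partial>\<mu>) = 1"
    using assms(2) unfolding is_density_def measurable_cong_sets[OF assms(1) refl] by auto
  show "integrable \<mu> g"
    using g by (intro integrableI_nonneg) auto
  show "integral\<^sup>L \<mu> g = 1"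
    using g by (subst integral_eq_nn_integral) auto
qed

lemma hmm_law_measure_states_and_X:
  assumes law: "hmm_law M \<mu> Q p f \<theta> X" and p: "invariant2 Q p"
    and f_norm: "\<And>k. k \<in> {0,1} \<Longrightarrow> integral\<^sup>L \<mu> (f k) = 1"
    and n: "n \<ge> 1" and B: "B \<in> sets borel"
  shows "measure M {\<omega>\<in>space M. (\<forall>i\<in>{1..n}. \<theta> i \<omega> \<in> {0,1}) \<and> X n \<omega> \<in> B}
     = p 0 * (LINT x:B|\<mu>. f 0 x) + p 1 * (LINT x:B|\<mu>. f 1 x)"
proof -
  interpret prob_space M
    using law by (simp add: hmm_law_def)
  have [measurable]: "\<theta> i \<in> measurable M (count_space UNIV)" "X i \<in> borel_measurable M" for i
    using law by (auto simp: hmm_law_def)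
  define A where "A i = (if i = n then B else UNIV)" for i
  have [measurable]: "A i \<in> sets borel" for i
    using B by (simp add: A_def)
  define E where "E s = {\<omega>\<in>space M. \<forall>i\<in>{1..n}. \<theta> i \<omega> = s i \<and> X i \<omega> \<in> A i}" for s
  have E_sets: "E s \<in> sets M" for s
    unfolding E_def by measurable
  have union: "{\<omega>\<in>space M. (\<forall>i\<in>{1..n}. \<theta> i \<omega> \<in> {0,1}) \<and> X n \<omega> \<in> B}
      = (\<Union>s\<in>{1..n} \<rightarrow>\<^sub>E {0,1}. E s)"
  proof (intro equalityI subsetI)
    fix \<omega> assume "\<omega> \<in> {\<omega>\<in>space M. (\<forall>i\<in>{1..n}. \<theta> i \<omega> \<in> {0,1}) \<and> X n \<omega> \<in> B}"
    then show "\<omega> \<in> (\<Union>s\<in>{1..n} \<rightarrow>\<^sub>E {0,1}. E s)"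
      by (intro UN_I[of "restrict (\<lambda>i. \<theta> i \<omega>) {1..n}"]) (auto simp: E_def A_def)
  next
    fix \<omega> assume "\<omega> \<in> (\<Union>s\<in>{1..n} \<rightarrow>\<^sub>E {0,1}. E s)"
    then obtain s where "s \<in> {1..n} \<rightarrow>\<^sub>E {0,1}" "\<omega> \<in> E s"
      by blast
    then show "\<omega> \<in> {\<omega>\<in>space M. (\<forall>i\<in>{1..n}. \<theta> i \<omega> \<in> {0,1}) \<and> X n \<omega> \<in> B}"
      using n by (force simp: E_def A_def)
  qed
  have disjoint: "disjoint_family_on E ({1..n} \<rightarrow>\<^sub>E {0,1})"
    unfolding disjoint_family_on_def
  proof (intro ballI impI)
    fix s t :: "nat \<Rightarrow> nat" assume "s \<in> {1..n} \<rightarrow>\<^sub>E {0,1}" "t \<in> {1..n} \<rightarrow>\<^sub>E {0,1}" "s \<noteq> t"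
    then obtain i where "i \<in> {1..n}" "s i \<noteq> t i"
      by (metis PiE_ext)
    then show "E s \<inter> E t = {}"
      by (auto simp: E_def)
  qed
  have measure_E: "measure M (E s) = path_weight Q p n s * (LINT x:B|\<mu>. f (s n) x)"
    if s: "s \<in> {1..n} \<rightarrow>\<^sub>E {0,1}" for s
  proof -
    have "\<forall>i\<in>{1..n}. s i \<in> {0,1} \<and> A i \<in> sets borel"
      using s by auto
    then have "measure M (E s) = path_weight Q p n s * (\<Prod>i\<in>{1..n}. LINT x:A i|\<mu>. f (s i) x)"
      using law n unfolding hmm_law_def E_def path_weight_def by blast
    also have "(\<Prod>i\<in>{1..n}. LINT x:A i|\<mu>. f (s i) x)
        = (LINT x:B|\<mu>. f (s n) x) * (\<Prod>i\<in>{1..n} - {n}. LINT x:A i|\<mu>. f (s i) x)"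
      using n by (subst prod.remove[of _ n]) (auto simp: A_def)
    also have "(\<Prod>i\<in>{1..n} - {n}. LINT x:A i|\<mu>. f (s i) x) = 1"
      using s f_norm by (intro prod.neutral) (auto simp: A_def set_lebesgue_integral_def)
    finally show ?thesis
      by simp
  qed
  have "measure M (\<Union>s\<in>{1..n} \<rightarrow>\<^sub>E {0,1}. E s) = (\<Sum>s\<in>{1..n} \<rightarrow>\<^sub>E {0,1}. measure M (E s))"
    using disjoint E_sets by (intro finite_measure_finite_Union) (auto simp: finite_PiE)
  also have "\<dots> = (\<Sum>s\<in>{1..n} \<rightarrow>\<^sub>E {0,1}. path_weight Q p n s * (LINT x:B|\<mu>. f (s n) x))"
    by (rule sum.cong) (simp_all add: measure_E)
  also have "\<dots> = p 0 * (LINT x:B|\<mu>. f 0 x) + p 1 * (LINT x:B|\<mu>. f 1 x)"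
    by (rule sum_path_weight_stationary[OF p n])
  finally show ?thesis
    unfolding union .
qed

definition mixture_density :: "(nat \<Rightarrow> real) \<Rightarrow> (nat \<Rightarrow> real \<Rightarrow> real) \<Rightarrow> real \<Rightarrow> real" where
  "mixture_density p f x = p 0 * f 0 x + p 1 * f 1 x"

lemma hmm_law_measure_X:
  assumes law: "hmm_law M \<mu> Q p f \<theta> X" and p: "invariant2 Q p"
    and sets_\<mu>: "sets \<mu> = sets borel" and dens: "\<And>k. k \<in> {0,1} \<Longrightarrow> is_density \<mu> (f k)"
    and n: "n \<ge> 1" and B: "B \<in> sets borel"
  shows "measure M {\<omega>\<in>space M. X n \<omega> \<in> B} = (LINT x:B|\<mu>. mixture_density p f x)"
proof -
  interpret prob_space M
    using law by (simp add: hmm_law_def)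
  have [measurable]: "\<theta> i \<in> measurable M (count_space UNIV)" "X i \<in> borel_measurable M" for i
    using law by (auto simp: hmm_law_def)
  have f_int: "integrable \<mu> (f k)" and f_norm: "integral\<^sup>L \<mu> (f k) = 1" if "k \<in> {0,1}" for k
    using is_density_integrable[OF sets_\<mu> dens[OF that]] by auto
  have "prob {\<omega>\<in>space M. (\<forall>i\<in>{1..n}. \<theta> i \<omega> \<in> {0,1}) \<and> X n \<omega> \<in> UNIV} = 1"
    using hmm_law_measure_states_and_X[OF law p f_norm n, of UNIV] f_norm p
    by (simp add: set_lebesgue_integral_def invariant2_def)
  then have "AE \<omega> in M. \<forall>i\<in>{1..n}. \<theta> i \<omega> \<in> {0,1}"
    by (auto dest: AE_prob_1)
  then have "measure M {\<omega>\<in>space M. X n \<omega> \<in> B}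
      = measure M {\<omega>\<in>space M. (\<forall>i\<in>{1..n}. \<theta> i \<omega> \<in> {0,1}) \<and> X n \<omega> \<in> B}"
    using B by (intro prob_eq_AE) (auto elim: eventually_mono)
  also have "\<dots> = p 0 * (LINT x:B|\<mu>. f 0 x) + p 1 * (LINT x:B|\<mu>. f 1 x)"
    by (rule hmm_law_measure_states_and_X[OF law p f_norm n B]) auto
  also have "\<dots> = (LINT x:B|\<mu>. mixture_density p f x)"
  proof -
    have "set_integrable \<mu> B (f k)" if "k \<in> {0,1}" for k
      unfolding set_integrable_def using integrable_mult_indicator[OF _ f_int[OF that], of B] B sets_\<mu>
      by simp
    then show ?thesis
      unfolding mixture_density_def by simp
  qed
  finally show ?thesis .
qed

lemma set_integral_inverse_gt_le:
  fixes \<mu> :: "real measure" and g :: "real \<Rightarrow> real" and c T \<nu> :: real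
  assumes g_nonneg: "\<And>x. 0 \<le> g x" and moment: "integrable \<mu> (\<lambda>x. \<bar>x\<bar> powr \<nu> * g x)"
    and Icc: "{-T..T} \<in> sets \<mu>" "emeasure \<mu> {-T..T} < \<infinity>"
    and c: "c > 0" and T: "T > 0" and \<nu>: "\<nu> \<ge> 0"
  shows "(LINT x:{x. c < 1 / g x}|\<mu>. g x)
    \<le> measure \<mu> {-T..T} / c + T powr -\<nu> * (LINT x|\<mu>. \<bar>x\<bar> powr \<nu> * g x)"
proof -
  have pointwise: "indicator {x. c < 1 / g x} x * g x
      \<le> indicator {-T..T} x / c + T powr -\<nu> * (\<bar>x\<bar> powr \<nu> * g x)" for x
  proof (cases "c < 1 / g x")
    case False
    then show ?thesis
      using g_nonneg[of x] c by simp
  next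
    case True
    then have g_pos: "0 < g x"
      using c g_nonneg[of x] by (cases "g x = 0") auto
    then have g_small: "g x < 1 / c"
      using True c by (simp add: field_simps)
    show ?thesis
    proof (cases "\<bar>x\<bar> \<le> T")
      case True
      have "0 \<le> T powr -\<nu> * (\<bar>x\<bar> powr \<nu> * g x)"
        using g_pos by simp
      then show ?thesis
        using True g_small \<open>c < 1 / g x\<close> by (simp add: indicator_def abs_le_iff)
    next
      case False
      then have "T powr \<nu> \<le> \<bar>x\<bar> powr \<nu>"
        using T \<nu> by (intro powr_mono2) auto
      then have "g x \<le> T powr -\<nu> * (\<bar>x\<bar> powr \<nu> * g x)"
        using T g_pos by (simp add: powr_minus field_simps)
      moreover have "0 \<le> indicator {-T..T} x / c"
        using c by simp
      ultimately show ?thesis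
        using \<open>c < 1 / g x\<close> by simp
    qed
  qed
  have "(LINT x:{x. c < 1 / g x}|\<mu>. g x)
      \<le> (LINT x|\<mu>. indicator {-T..T} x / c + T powr -\<nu> * (\<bar>x\<bar> powr \<nu> * g x))"
    unfolding set_lebesgue_integral_def using pointwise moment Icc c g_nonneg
    by (intro integral_mono') auto
  also have "\<dots> = measure \<mu> {-T..T} / c + T powr -\<nu> * (LINT x|\<mu>. \<bar>x\<bar> powr \<nu> * g x)"
    using moment Icc by simp
  finally show ?thesis .
qed

lemma integrable_moment_mixture_density:
  assumes sets_\<mu>: "sets \<mu> = sets borel" and dens: "\<And>j. j \<in> {0,1} \<Longrightarrow> is_density \<mu> (f j)"
    and moment: "\<And>j. j \<in> {0,1} \<Longrightarrow> (\<integral>\<^sup>+ x. ennreal (\<bar>x\<bar> powr \<nu> * f j x) \<partial>\<mu>) < \<infinity>"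
  shows "integrable \<mu> (\<lambda>x. \<bar>x\<bar> powr \<nu> * mixture_density p f x)"
proof -
  have "integrable \<mu> (\<lambda>x. \<bar>x\<bar> powr \<nu> * f j x)" if j: "j \<in> {0,1}" for j
  proof (rule integrableI_nonneg)
    have "f j \<in> borel_measurable borel"
      using dens[OF j] by (simp add: is_density_def)
    then show "(\<lambda>x. \<bar>x\<bar> powr \<nu> * f j x) \<in> borel_measurable \<mu>"
      unfolding measurable_cong_sets[OF sets_\<mu> refl] by measurable
  qed (use dens[OF j] moment[OF j] in \<open>auto simp: is_density_def\<close>)
  then have "integrable \<mu> (\<lambda>x. p 0 * (\<bar>x\<bar> powr \<nu> * f 0 x) + p 1 * (\<bar>x\<bar> powr \<nu> * f 1 x))"
    by auto
  then show ?thesis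
    by (simp add: mixture_density_def algebra_simps)
qed

lemma sets_base_measure [measurable_cong]: "sets (base_measure disc) = sets borel"
  by (simp add: base_measure_def zcount_def)

lemma emeasure_base_measure_Icc_le:
  assumes T: "0 \<le> T"
  shows "emeasure (base_measure disc) {-T..T} \<le> ennreal (2 * T + 1)"
proof (cases disc)
  case False
  then show ?thesis
    using T by (simp add: base_measure_def)
next
  case True
  have "real_of_int -` {-T..T} = {\<lceil>-T\<rceil>..\<lfloor>T\<rfloor>}"
    by (auto simp: le_floor_iff ceiling_le_iff)
  then have "emeasure zcount {-T..T} = ennreal (real (nat (\<lfloor>T\<rfloor> - \<lceil>-T\<rceil> + 1)))"
    unfolding zcount_def by (subst emeasure_distr) (auto simp: ennreal_of_nat_eq_real_of_nat)
  also have "\<dots> \<le> ennreal (2 * T + 1)"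
    using T by (intro ennreal_leI) linarith
  finally show ?thesis
    using True by (simp add: base_measure_def)
qed

lemma (in finite_measure) measure_Max_gt_le_sum:
  fixes h :: "'i \<Rightarrow> 'a \<Rightarrow> real"
  assumes I: "finite I" "I \<noteq> {}" and sets: "\<And>i. i \<in> I \<Longrightarrow> {x\<in>space M. c < h i x} \<in> sets M"
  shows "measure M {x\<in>space M. c < Max ((\<lambda>i. h i x) ` I)} \<le> (\<Sum>i\<in>I. measure M {x\<in>space M. c < h i x})"
proof -
  have "{x\<in>space M. c < Max ((\<lambda>i. h i x) ` I)} = (\<Union>i\<in>I. {x\<in>space M. c < h i x})"
    using I by (auto simp: Max_gr_iff)
  then show ?thesis
    using I sets by (simp add: measure_UNION_le)
qed

lemma tendsto_powr_tail_bound: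
  fixes a b \<nu> C :: real
  assumes b: "0 < b" "1 < b * \<nu>" "b < a - 1"
  shows "(\<lambda>R::nat. real R * ((2 * real R powr b + 1) / real R powr a + (real R powr b) powr -\<nu> * C))
    \<longlonglongrightarrow> 0"
proof -
  have "x * ((2 * x powr b + 1) / x powr a + (x powr b) powr -\<nu> * C)
      = 2 * x powr (1 + b - a) + x powr (1 - a) + C * x powr (1 - b * \<nu>)" if "x > 0" for x :: real
  proof -
    have "x powr (1 + b - a) = x * x powr b / x powr a" "x powr (1 - a) = x / x powr a"
      "x powr (1 - b * \<nu>) = x * (x powr b) powr -\<nu>"
      using that by (simp_all add: powr_add powr_diff powr_powr powr_minus divide_inverse)
    then show ?thesis
      by (simp add: algebra_simps add_divide_distrib)
  qed
  then have "\<forall>\<^sub>F R in sequentially. 2 * real R powr (1 + b - a) + real R powr (1 - a) + C * real R powr (1 - b * \<nu>)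
      = real R * ((2 * real R powr b + 1) / real R powr a + (real R powr b) powr -\<nu> * C)"
    by (intro eventually_sequentiallyI[of 1]) simp
  moreover have "(\<lambda>R::nat. 2 * real R powr (1 + b - a) + real R powr (1 - a) + C * real R powr (1 - b * \<nu>))
      \<longlonglongrightarrow> 2 * 0 + 0 + C * 0"
    using b by (intro tendsto_add tendsto_mult tendsto_const tendsto_neg_powr[OF _ filterlim_real_sequentially])
      auto
  ultimately show ?thesis
    by (simp add: Lim_transform_eventually)
qed

lemma hmm_law_prob_Max_inverse_mixture_gt_le:
  assumes law: "hmm_law M (base_measure disc) Q p f \<theta> X" and p: "invariant2 Q p"
    and dens: "\<And>k. k \<in> {0,1} \<Longrightarrow> is_density (base_measure disc) (f k)"
    and moment: "integrable (base_measure disc) (\<lambda>x. \<bar>x\<bar> powr \<nu> * mixture_density p f x)"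
    and R: "R \<ge> 1" and c: "c > 0" and T: "T > 0" and \<nu>: "\<nu> \<ge> 0"
  shows "measure M {\<omega>\<in>space M. c < Max ((\<lambda>i. 1 / mixture_density p f (X i \<omega>)) ` {1..R})}
    \<le> real R * ((2 * T + 1) / c
        + T powr -\<nu> * (LINT x|base_measure disc. \<bar>x\<bar> powr \<nu> * mixture_density p f x))"
    (is "_ \<le> real R * ?bound")
proof -
  interpret prob_space M
    using law by (simp add: hmm_law_def)
  have [measurable]: "X i \<in> borel_measurable M" for i
    using law by (auto simp: hmm_law_def)
  have [measurable]: "f 0 \<in> borel_measurable borel" "f 1 \<in> borel_measurable borel"
    using dens by (auto simp: is_density_def)
  have mixture_nonneg: "0 \<le> mixture_density p f x" for x
    using p dens by (auto simp: mixture_density_def invariant2_def is_density_def)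
  have "measure M {\<omega>\<in>space M. c < Max ((\<lambda>i. 1 / mixture_density p f (X i \<omega>)) ` {1..R})}
      \<le> (\<Sum>i\<in>{1..R}. measure M {\<omega>\<in>space M. c < 1 / mixture_density p f (X i \<omega>)})"
  proof (rule measure_Max_gt_le_sum)
    show "{\<omega>\<in>space M. c < 1 / mixture_density p f (X i \<omega>)} \<in> events" for i
      unfolding mixture_density_def by measurable
  qed (use R in auto)
  also have "\<dots> \<le> (\<Sum>i\<in>{1..R}. ?bound)"
  proof (rule sum_mono)
    fix i assume i: "i \<in> {1..R}"
    have B: "{x. c < 1 / mixture_density p f x} \<in> sets borel"
      unfolding mixture_density_def by measurable
    have "measure M {\<omega>\<in>space M. c < 1 / mixture_density p f (X i \<omega>)}
        = (LINT x:{x. c < 1 / mixture_density p f x}|base_measure disc. mixture_density p f x)"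
      using hmm_law_measure_X[OF law p sets_base_measure dens _ B, of i] i by simp
    also have "\<dots> \<le> measure (base_measure disc) {-T..T} / c
        + T powr -\<nu> * (LINT x|base_measure disc. \<bar>x\<bar> powr \<nu> * mixture_density p f x)"
      using emeasure_base_measure_Icc_le[of T disc] T c \<nu>
      by (intro set_integral_inverse_gt_le mixture_nonneg moment) (auto simp: le_less_trans)
    also have "\<dots> \<le> ?bound"
      using emeasure_base_measure_Icc_le[of T disc] T c
      by (simp add: measure_def enn2real_leI divide_right_mono)
    finally show "measure M {\<omega>\<in>space M. c < 1 / mixture_density p f (X i \<omega>)} \<le> ?bound" .
  qed
  also have "\<dots> = real R * ?bound"
    by simp
  finally show ?thesis .
qed

theorem lemma12:
  fixes M :: "'w measure" and disc :: bool
    and Q :: "nat \<Rightarrow> nat \<Rightarrow> real" and p :: "nat \<Rightarrow> real"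
    and f :: "nat \<Rightarrow> real \<Rightarrow> real"
    and \<theta> :: "nat \<Rightarrow> 'w \<Rightarrow> nat" and X :: "nat \<Rightarrow> 'w \<Rightarrow> real"
    and \<nu> a :: real
  assumes Q: "stoch2 Q"
    and p: "invariant2 Q p"
    and dens: "is_density (base_measure disc) (f 0)" "is_density (base_measure disc) (f 1)"
    and law: "hmm_law M (base_measure disc) Q p f \<theta> X"
    and nu_pos: "\<nu> > 0"
    and A1_i: "\<forall>j\<in>{0,1}. (\<integral>\<^sup>+ x. ennreal (\<bar>x\<bar> powr \<nu> * f j x) \<partial>base_measure disc) < \<infinity>"
    and A1_ii: "A1_ii disc (f 0) (f 1)"
    and a: "a > 1 + 1 / \<nu>"
  shows "((\<lambda>R::nat. measure M {\<omega> \<in> space M.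
            Max ((\<lambda>i. 1 / (p 0 * f 0 (X i \<omega>) + p 1 * f 1 (X i \<omega>))) ` {1..R}) > real R powr a})
          \<longlongrightarrow> 0) sequentially"
proof -
  have densities: "\<And>k. k \<in> {0,1} \<Longrightarrow> is_density (base_measure disc) (f k)"
    using dens by auto
  have moment: "integrable (base_measure disc) (\<lambda>x. \<bar>x\<bar> powr \<nu> * mixture_density p f x)"
    using A1_i by (intro integrable_moment_mixture_density[OF sets_base_measure densities]) auto
  have "1 / \<nu> < a - 1"
    using a by linarith
  then obtain b where b: "1 / \<nu> < b" "b < a - 1"
    using dense by blast
  have b_pos: "0 < b"
    using b(1) nu_pos by (smt (verit) zero_less_divide_1_iff)
  have b\<nu>: "1 < b * \<nu>"
    using b(1) nu_pos by (simp add: field_simps)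
  define C where "C = (LINT x|base_measure disc. \<bar>x\<bar> powr \<nu> * mixture_density p f x)"
  have "\<forall>\<^sub>F R in sequentially. measure M {\<omega> \<in> space M.
      real R powr a < Max ((\<lambda>i. 1 / mixture_density p f (X i \<omega>)) ` {1..R})}
    \<le> real R * ((2 * real R powr b + 1) / real R powr a + (real R powr b) powr -\<nu> * C)"
    using nu_pos unfolding C_def
    by (intro eventually_sequentiallyI[of 1] hmm_law_prob_Max_inverse_mixture_gt_le[OF law p densities moment])
      auto
  then show ?thesis
    unfolding mixture_density_def[symmetric]
    by (intro tendsto_sandwich[OF _ _ tendsto_const tendsto_powr_tail_bound[OF b_pos b\<nu> b(2)]]) auto
qed

end
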